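(* Let $D$ be an instance all of whose tuples are endogenous, let $\mathcal{Q}$ be a monotone query (defining a view $\mathcal{V}$ with $\mathcal{V}(D)=\mathcal{Q}(D)$), and let $\bar a\in\mathcal{Q}(D)$. Then for $D'\subseteq D$, we have $(D,D',\bar a)\in\mathcal{MSSEP}^{s}(\mathcal{Q})$ if and only if there is $t\in D\smallsetminus D'$ such that $t\in\mathit{Causes}(D,\mathcal{Q}(\bar a))$ and $D\smallsetminus(D'\cup\{t\})\in\mathit{Cont}(D,\mathcal{Q}(\bar a),t)$.
   Context: A query $\mathcal{Q}$ is monotone if $D_1\subseteq D_2$ implies $\mathcal{Q}(D_1)\subseteq\mathcal{Q}(D_2)$; $D\models\mathcal{Q}(\bar a)$ means $\bar a\in\mathcal{Q}(D)$. Here $D^n=D$ (all tuples endogenous). A tuple $\tau\in D^n$ is an actual cause for $\bar a$ if there is $\Gamma\subseteq D^n$ with $D\smallsetminus\Gamma\models\mathcal{Q}(\bar a)$ and $D\smallsetminus(\Gamma\cup\{\tau\})\not\models\mathcal{Q}(\bar a)$; $\mathit{Causes}(D,\mathcal{Q}(\bar a))$ is the set of actual causes. $\mathit{Cont}(D,\mathcal{Q}(\bar a),\tau)$ is the set of $\Lambda\subseteq D^n$ with $D\smallsetminus\Lambda\models\mathcal{Q}(\bar a)$, $D\smallsetminus(\Lambda\cup\{\tau\})\not\models\mathcal{Q}(\bar a)$, and $D\smallsetminus(\Lambda'\cup\{\tau\})\models\mathcal{Q}(\bar a)$ for every $\Lambda'\subsetneq\Lambda$. $\mathcal{MSSEP}^{s}(\mathcal{Q})$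 is the set of triples $(D,D',\bar a)$ with $\bar a\in\mathcal{Q}(D)$, $D'\subseteq D$, $\bar a\notin\mathcal{Q}(D')$, and $D'$ subset-maximal among subsets of $D$ with this last property (minimal source-side-effect). *)

theory Defs
  imports Main
begin

text \<open>A database instance is modelled as a finite set of tuples (facts) of type 'f;
a query maps an instance to the set of its answers (of type 'a).
All tuples of D are endogenous (D^n = D).\<close>

definition monotone_query :: "('f set \<Rightarrow> 'a set) \<Rightarrow> bool" where
  "monotone_query Q \<longleftrightarrow> (\<forall>D1 D2. D1 \<subseteq> D2 \<longrightarrow> Q D1 \<subseteq> Q D2)"

definition models :: "'f set \<Rightarrow> ('f set \<Rightarrow> 'a set) \<Rightarrow> 'a \<Rightarrow> bool" where
  "models D Q a \<longleftrightarrow> a \<in> Q D"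

definition Causes :: "'f set \<Rightarrow> ('f set \<Rightarrow> 'a set) \<Rightarrow> 'a \<Rightarrow> 'f set" where
  "Causes D Q a = {\<tau> \<in> D. \<exists>\<Gamma> \<subseteq> D. models (D - \<Gamma>) Q a \<and>
                              \<not> models (D - (\<Gamma> \<union> {\<tau>})) Q a}"

definition Cont :: "'f set \<Rightarrow> ('f set \<Rightarrow> 'a set) \<Rightarrow> 'a \<Rightarrow> 'f \<Rightarrow> 'f set set" where
  "Cont D Q a \<tau> = {\<Lambda>. \<Lambda> \<subseteq> D \<and> models (D - \<Lambda>) Q a \<and>
                        \<not> models (D - (\<Lambda> \<union> {\<tau>})) Q a \<and>
                        (\<forall>\<Lambda>'. \<Lambda>' \<subset> \<Lambda> \<longrightarrow> models (D - (\<Lambda>' \<union> {\<tau>})) Q a)}"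

definition MSSEP_s :: "('f set \<Rightarrow> 'a set) \<Rightarrow> ('f set \<times> 'f set \<times> 'a) set" where
  "MSSEP_s Q = {(D, D', a). a \<in> Q D \<and> D' \<subseteq> D \<and> a \<notin> Q D' \<and>
                  (\<forall>D''. D' \<subset> D'' \<and> D'' \<subseteq> D \<longrightarrow> a \<in> Q D'')}"

end

theory Submission
  imports Defs
begin

text \<open>Removing the contingency set \<open>D - (D' \<union> {t})\<close> from \<open>D\<close> leaves \<open>D' \<union> {t}\<close>, and
  removing also \<open>t\<close> leaves \<open>D'\<close>; its proper subsets correspond to the instances strictly
  between \<open>D'\<close> and \<open>D - {t}\<close>. So the contingency condition says that \<open>D'\<close> falsifies the
  answer while \<open>D' \<union> {t}\<close> and all instances between \<open>D'\<close> and \<open>D - {t}\<close> satisfy it.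
  By monotonicity, maximality of \<open>D'\<close> only has to be checked on the one-fact extensions
  \<open>D' \<union> {t}\<close>, and the two descriptions coincide.\<close>

lemma Cont_imp_Causes:
  assumes "\<Lambda> \<in> Cont D Q a \<tau>" and "\<tau> \<in> D"
  shows "\<tau> \<in> Causes D Q a"
  using assms unfolding Cont_def Causes_def by blast

lemma complement_Cont_iff:
  assumes "D' \<subseteq> D" and "t \<in> D - D'"
  shows "D - (D' \<union> {t}) \<in> Cont D Q a t \<longleftrightarrow>
         a \<in> Q (insert t D') \<and> a \<notin> Q D' \<and>
         (\<forall>D''. D' \<subset> D'' \<and> D'' \<subseteq> D - {t} \<longrightarrow> a \<in> Q D'')"
proof -
  define L where "L = D - (D' \<union> {t})"
  have "L \<subseteq> D" and remove_L: "D - L = insert t D'" and remove_L_t: "D - (L \<union> {t}) = D'"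
    using assms unfolding L_def by auto
  have subsets_iff_supersets: "(\<forall>L'. L' \<subset> L \<longrightarrow> a \<in> Q (D - (L' \<union> {t}))) \<longleftrightarrow>
        (\<forall>D''. D' \<subset> D'' \<and> D'' \<subseteq> D - {t} \<longrightarrow> a \<in> Q D'')"
  proof (intro iffI allI impI)
    fix D'' assume supsets: "\<forall>L'. L' \<subset> L \<longrightarrow> a \<in> Q (D - (L' \<union> {t}))"
      and between: "D' \<subset> D'' \<and> D'' \<subseteq> D - {t}"
    have "D - (D'' \<union> {t}) \<subset> L"
      using between assms unfolding L_def by auto
    then have "a \<in> Q (D - ((D - (D'' \<union> {t})) \<union> {t}))"
      using supsets by blast
    moreover have "D - ((D - (D'' \<union> {t})) \<union> {t}) = D''"
      using between by auto
    ultimately show "a \<in> Q D''" by simp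
  next
    fix L' assume supsets: "\<forall>D''. D' \<subset> D'' \<and> D'' \<subseteq> D - {t} \<longrightarrow> a \<in> Q D''"
      and "L' \<subset> L"
    then have "D' \<subset> D - (L' \<union> {t}) \<and> D - (L' \<union> {t}) \<subseteq> D - {t}"
      using assms unfolding L_def by auto
    then show "a \<in> Q (D - (L' \<union> {t}))" using supsets by blast
  qed
  have "L \<in> Cont D Q a t \<longleftrightarrow>
        a \<in> Q (D - L) \<and> a \<notin> Q (D - (L \<union> {t})) \<and>
        (\<forall>L'. L' \<subset> L \<longrightarrow> a \<in> Q (D - (L' \<union> {t})))"
    using \<open>L \<subseteq> D\<close> unfolding Cont_def models_def by simp
  then show ?thesis
    unfolding subsets_iff_supersets remove_L remove_L_t by (simp only: L_def)
qed

lemma MSSEP_s_iff_one_fact_extensions: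
  assumes "monotone_query Q"
  shows "(D, D', a) \<in> MSSEP_s Q \<longleftrightarrow>
         a \<in> Q D \<and> D' \<subseteq> D \<and> a \<notin> Q D' \<and> (\<forall>t \<in> D - D'. a \<in> Q (insert t D'))"
proof -
  have "a \<in> Q D''"
    if "\<forall>t \<in> D - D'. a \<in> Q (insert t D')" "D' \<subset> D''" "D'' \<subseteq> D" for D''
  proof -
    obtain t where "t \<in> D'' - D'" using \<open>D' \<subset> D''\<close> by blast
    then have "a \<in> Q (insert t D')" and "insert t D' \<subseteq> D''"
      using that by auto
    then show ?thesis using assms unfolding monotone_query_def by blast
  qed
  then show ?thesis unfolding MSSEP_s_def by auto
qed

theorem proposition7:
  fixes D D' :: "'f set" and Q :: "'f set \<Rightarrow> 'a set" and a :: 'a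
  assumes "finite D"
    and "monotone_query Q"
    and "a \<in> Q D"
    and "D' \<subseteq> D"
  shows "(D, D', a) \<in> MSSEP_s Q \<longleftrightarrow>
         (\<exists>t \<in> D - D'. t \<in> Causes D Q a \<and> D - (D' \<union> {t}) \<in> Cont D Q a t)"
proof
  assume "(D, D', a) \<in> MSSEP_s Q"
  then have falsified: "a \<notin> Q D'"
    and maximal: "\<forall>D''. D' \<subset> D'' \<and> D'' \<subseteq> D \<longrightarrow> a \<in> Q D''"
    unfolding MSSEP_s_def by auto
  have "D' \<subset> D" using falsified assms(3,4) by auto
  then obtain t where t: "t \<in> D - D'" using psubset_imp_ex_mem by metis
  have "a \<in> Q (insert t D')"
    using t assms(4) by (intro maximal[rule_format]) auto
  then have contingency: "D - (D' \<union> {t}) \<in> Cont D Q a t"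
    unfolding complement_Cont_iff[OF assms(4) t] using maximal falsified by auto
  moreover have "t \<in> Causes D Q a"
    using contingency t by (intro Cont_imp_Causes) auto
  ultimately show "\<exists>t \<in> D - D'. t \<in> Causes D Q a \<and> D - (D' \<union> {t}) \<in> Cont D Q a t"
    using t by (intro bexI[of _ t]) auto
next
  assume "\<exists>t \<in> D - D'. t \<in> Causes D Q a \<and> D - (D' \<union> {t}) \<in> Cont D Q a t"
  then obtain t where t: "t \<in> D - D'" and "D - (D' \<union> {t}) \<in> Cont D Q a t" by blast
  then have extended_by_t: "a \<in> Q (insert t D')" and falsified: "a \<notin> Q D'"
    and between: "\<forall>D''. D' \<subset> D'' \<and> D'' \<subseteq> D - {t} \<longrightarrow> a \<in> Q D''"
    unfolding complement_Cont_iff[OF assms(4) t] by simp_all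
  have "\<forall>s \<in> D - D'. a \<in> Q (insert s D')"
  proof
    fix s assume "s \<in> D - D'"
    show "a \<in> Q (insert s D')"
    proof (cases "s = t")
      case True
      then show ?thesis using extended_by_t by simp
    next
      case False
      then show ?thesis using \<open>s \<in> D - D'\<close> t assms(4) by (intro between[rule_format]) auto
    qed
  qed
  then show "(D, D', a) \<in> MSSEP_s Q"
    unfolding MSSEP_s_iff_one_fact_extensions[OF assms(2)] using assms(3,4) falsified by simp
qed

end
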